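(* Let $d=2$, let $(\mathbb Q_1,\mathbb Q_2)$ be a numéraire-consistent family of probability measures, and let $\overline{\mathbb Q}$ be the valuation measure with respect to the basket associated with it (namely $\overline{\mathbb Q}=\overline S_1(0)\mathbb Q_1+\overline S_2(0)\mathbb Q_2$). Then for every $r\in[0,T]$ and every $C\in\mathcal C$ with $C_i\in L^1(\mathbb Q_i)$ for $i=1,2$, $$\mathbb E^{\overline{\mathbb Q}}_r[\overline C]=\overline S_1(r)\mathbb E^{\mathbb Q_1}_r[C_1]+\overline S_2(r)\mathbb E^{\mathbb Q_2}_r\big[C_2\mathbf 1_{\{S_{1,2}(T)=\infty\}}\big],$$ and consequently, on $\{1\in\mathfrak A(r)\}$, $$\frac{\mathbb E^{\overline{\mathbb Q}}_r[\overline C]}{\overline S_1(r)}=\mathbb E^{\mathbb Q_1}_r[C_1]+S_{1,2}(r)\,\mathbb E^{\mathbb Q_2}_r\big[C_2\mathbf 1_{\{S_{1,2}(T)=\infty\}}\big].$$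
   Context: Fix $T>0$ and a filtered space $(\Omega,\mathcal{F}(T),(\mathcal{F}(t))_{t\in[0,T]})$ with right-continuous filtration and trivial $\mathcal{F}(0)$. For $x,y\in[0,\infty]$ the product $xy$ is defined except when one is $0$ and the other is $\infty$. With $d=2$, an exchange matrix is $s=(s_{i,j})\in[0,\infty]^{2\times 2}$ with $s_{i,i}=1$ and $s_{i,j}s_{j,k}=s_{i,k}$ whenever the product is defined (so $s_{2,1}=1/s_{1,2}$). $S=(S_{i,j})$ is a right-continuous adapted process with $S(t)$ an exchange matrix for every $t$ and $S_{1,2}(0)\in(0,\infty)$. Active currencies: $\mathfrak{A}(t)=\{i:\sum_jS_{i,j}(t)<\infty\}$. Basket prices: $\overline S_i=1/\sum_jS_{i,j}$. A value vector for $s$ is $v\in[0,\infty]^2$ with $s_{i,j}v_j=v_i$ whenever defined; $\mathcal{C}$ is the set of $\mathcal{F}(T)$-measurable value vectors for $S(T)$, and $\overline C=\frac{1}{|\mathfrak{A}(T)|}\sum_{j\in\mathfrak{A}(T)}\overline S_j(T)C_j$. A family $(\mathbb{Q}_1,\mathbb Q_2)$ of probability measures is numéraire-consistent if $\mathbb{E}^{\mathbb{Q}_i}[S_{i,j}(t)\mathbf{1}_A]=S_{i,j}(0)\,\mathbb{Q}_j(A\cap\{S_{j,i}(t)>0\})$ for all $i,j\in\{1,2\}$, $t\in[0,T]$, $A\in\mathcal{F}(t)$. $\mathbb{E}^{\mathbb Q}_r$ is conditional expectation given $\mathcal F(r)$. *)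

theory Defs
  imports "HOL-Probability.Probability"
begin

text \<open>Currencies are indexed by the natural numbers 1 and 2 (d = 2).
  Quantities in [0,\<infinity>] are modelled by ennreal.\<close>

definition prod_defined :: "ennreal \<Rightarrow> ennreal \<Rightarrow> bool" where
  "prod_defined x y \<longleftrightarrow> \<not> (x = 0 \<and> y = \<top>) \<and> \<not> (x = \<top> \<and> y = 0)"

definition exchange_matrix :: "(nat \<Rightarrow> nat \<Rightarrow> ennreal) \<Rightarrow> bool" where
  "exchange_matrix s \<longleftrightarrow>
     (\<forall>i\<in>{1,2}. s i i = 1) \<and>
     (\<forall>i\<in>{1,2}. \<forall>j\<in>{1,2}. \<forall>k\<in>{1,2}.
        prod_defined (s i j) (s j k) \<longrightarrow> s i j * s j k = s i k)"

definition active :: "(nat \<Rightarrow> nat \<Rightarrow> ennreal) \<Rightarrow> nat set" where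
  "active s = {i \<in> {1,2}. (\<Sum>j\<in>{1,2}. s i j) < \<top>}"

definition basket_price :: "(nat \<Rightarrow> nat \<Rightarrow> ennreal) \<Rightarrow> nat \<Rightarrow> ennreal" where
  "basket_price s i = 1 / (\<Sum>j\<in>{1,2}. s i j)"

definition value_vector :: "(nat \<Rightarrow> nat \<Rightarrow> ennreal) \<Rightarrow> (nat \<Rightarrow> ennreal) \<Rightarrow> bool" where
  "value_vector s v \<longleftrightarrow>
     (\<forall>i\<in>{1,2}. \<forall>j\<in>{1,2}. prod_defined (s i j) (v j) \<longrightarrow> s i j * v j = v i)"

definition basket_value :: "(nat \<Rightarrow> nat \<Rightarrow> ennreal) \<Rightarrow> (nat \<Rightarrow> ennreal) \<Rightarrow> ennreal" where
  "basket_value s c = (1 / of_nat (card (active s))) * (\<Sum>j\<in>active s. basket_price s j * c j)"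

text \<open>Filtered space (Omega, F(T), (F(t))_{t in [0,T]}): M carries (Omega, F(T)),
  F t carries F(t); right-continuous, with trivial F(0).\<close>
definition filtration :: "'a measure \<Rightarrow> (real \<Rightarrow> 'a measure) \<Rightarrow> real \<Rightarrow> bool" where
  "filtration M F T \<longleftrightarrow>
     (\<forall>t\<in>{0..T}. subalgebra M (F t)) \<and>
     (\<forall>s t. 0 \<le> s \<longrightarrow> s \<le> t \<longrightarrow> t \<le> T \<longrightarrow> sets (F s) \<subseteq> sets (F t)) \<and>
     sets (F T) = sets M \<and>
     (\<forall>t\<in>{0..<T}. sets (F t) = (\<Inter>u\<in>{t<..T}. sets (F u))) \<and>
     sets (F 0) = {{}, space M}"

definition exchange_process ::
  "'a measure \<Rightarrow> (real \<Rightarrow> 'a measure) \<Rightarrow> real \<Rightarrow> (real \<Rightarrow> 'a \<Rightarrow> nat \<Rightarrow> nat \<Rightarrow> ennreal) \<Rightarrow> bool" where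
  "exchange_process M F T S \<longleftrightarrow>
     (\<forall>t\<in>{0..T}. \<forall>\<omega>\<in>space M. exchange_matrix (S t \<omega>)) \<and>
     (\<forall>t\<in>{0..T}. \<forall>i\<in>{1,2}. \<forall>j\<in>{1,2}. (\<lambda>\<omega>. S t \<omega> i j) \<in> borel_measurable (F t)) \<and>
     (\<forall>\<omega>\<in>space M. \<forall>i\<in>{1,2}. \<forall>j\<in>{1,2}. \<forall>t\<in>{0..<T}.
        ((\<lambda>u. S u \<omega> i j) \<longlongrightarrow> S t \<omega> i j) (at_right t)) \<and>
     (\<forall>\<omega>\<in>space M. 0 < S 0 \<omega> 1 2 \<and> S 0 \<omega> 1 2 < \<top>)"

definition claim ::
  "'a measure \<Rightarrow> real \<Rightarrow> (real \<Rightarrow> 'a \<Rightarrow> nat \<Rightarrow> nat \<Rightarrow> ennreal) \<Rightarrow> ('a \<Rightarrow> nat \<Rightarrow> ennreal) \<Rightarrow> bool" where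
  "claim M T S C \<longleftrightarrow>
     (\<forall>i\<in>{1,2}. (\<lambda>\<omega>. C \<omega> i) \<in> borel_measurable M) \<and>
     (\<forall>\<omega>\<in>space M. value_vector (S T \<omega>) (C \<omega>))"

definition numeraire_consistent ::
  "'a measure \<Rightarrow> (real \<Rightarrow> 'a measure) \<Rightarrow> real \<Rightarrow> (real \<Rightarrow> 'a \<Rightarrow> nat \<Rightarrow> nat \<Rightarrow> ennreal)
     \<Rightarrow> (nat \<Rightarrow> 'a measure) \<Rightarrow> bool" where
  "numeraire_consistent M F T S Q \<longleftrightarrow>
     (\<forall>i\<in>{1,2}. prob_space (Q i) \<and> sets (Q i) = sets M) \<and>
     (\<forall>i\<in>{1,2}. \<forall>j\<in>{1,2}. \<forall>t\<in>{0..T}. \<forall>A\<in>sets (F t). \<forall>\<omega>\<in>space M.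
        (\<integral>\<^sup>+x. S t x i j * indicator A x \<partial>Q i)
          = S 0 \<omega> i j * emeasure (Q j) (A \<inter> {x\<in>space M. 0 < S t x j i}))"

text \<open>Valuation measure w.r.t. the basket: Qbar = Sbar_1(0) Q_1 + Sbar_2(0) Q_2,
  where s0 is the (deterministic) value S(0).\<close>
definition valuation_measure ::
  "'a measure \<Rightarrow> (nat \<Rightarrow> nat \<Rightarrow> ennreal) \<Rightarrow> (nat \<Rightarrow> 'a measure) \<Rightarrow> 'a measure" where
  "valuation_measure M s0 Q = measure_of (space M) (sets M)
     (\<lambda>A. basket_price s0 1 * emeasure (Q 1) A + basket_price s0 2 * emeasure (Q 2) A)"

end

theory Submission
  imports Defs
begin

text \<open>
  The valuation measure \<open>Qbar\<close> is a change of numeraire away from each \<open>Q i\<close>: for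
  \<open>F t\<close>-measurable \<open>X\<close>, the integral of \<open>Sbar_i(t) X\<close> against \<open>Qbar\<close> equals
  \<open>Sbar_i(0)\<close> times the integral of \<open>X\<close> against \<open>Q i\<close>. Indeed, numeraire consistency turns the
  \<open>Q j\<close>-part of \<open>Qbar\<close> into a \<open>Q i\<close>-integral weighted by \<open>S_ij(t)\<close>, and
  \<open>Sbar_i(t) (1 + S_ij(t)) = 1\<close> wherever \<open>S_ij(t)\<close> is finite, which holds \<open>Q i\<close>-almost surely.
  Pointwise, \<open>Cbar = Sbar_1(T) C_1 + Sbar_2(T) C_2 1{S_12(T) = \<infinity>}\<close>. Testing the claimed
  identity against a set of \<open>F r\<close> and using the formula above once at time \<open>T\<close> and once at time
  \<open>r\<close>, with the \<open>Q i\<close>-conditional expectations in between, gives the first statement; the second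
  follows from \<open>Sbar_2 = S_12 Sbar_1\<close> on \<open>{1 \<in> A}\<close>.
\<close>

lemma one_div_one_plus_reciprocal:
  fixes a b :: ennreal
  assumes "0 < a" "a < \<top>" "a * b = 1"
  shows "1 / (1 + b) = a * (1 / (1 + a))"
proof -
  obtain x where x: "a = ennreal x" "0 < x"
    using assms(1,2) by (cases a) auto
  have "b = ennreal (1 / x)"
    using assms(3) x by (cases b) (auto simp: ennreal_top_mult field_simps simp flip: ennreal_mult)
  moreover have "1 / (1 + 1 / x) = x * (1 / (1 + x))"
    using x(2) by (simp add: field_simps)
  ultimately show ?thesis
    using x by (simp add: divide_ennreal add_pos_pos ennreal_mult'[symmetric] flip: ennreal_plus ennreal_1)
qed

lemma exchange_matrix_diag: "exchange_matrix s \<Longrightarrow> i \<in> {1,2} \<Longrightarrow> s i i = 1"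
  unfolding exchange_matrix_def by blast

lemma exchange_matrix_zero_iff_top:
  assumes s: "exchange_matrix s" and ij: "i \<in> {1,2}" "j \<in> {1,2}"
  shows "s i j = 0 \<longleftrightarrow> s j i = \<top>"
proof -
  have "s i j * s j i = s i i" if "prod_defined (s i j) (s j i)"
    using s ij that unfolding exchange_matrix_def by blast
  then have "prod_defined (s i j) (s j i) \<Longrightarrow> s i j * s j i = 1"
    using exchange_matrix_diag[OF s ij(1)] by simp
  then show ?thesis
    unfolding prod_defined_def by (cases "s i j = 0"; cases "s j i = \<top>") (auto simp: ennreal_mult_eq_top_iff)
qed

lemma exchange_matrix_mult_inverse:
  assumes s: "exchange_matrix s" and ij: "i \<in> {1,2}" "j \<in> {1,2}" and "0 < s i j" "s i j < \<top>"
  shows "s i j * s j i = 1"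
proof -
  have "prod_defined (s i j) (s j i)"
    using assms exchange_matrix_zero_iff_top[OF s ij(2,1)] by (auto simp: prod_defined_def)
  then show ?thesis
    using s ij exchange_matrix_diag[OF s ij(1)] unfolding exchange_matrix_def by metis
qed

lemma sum_row_exchange_matrix:
  assumes s: "exchange_matrix s" and ij: "i \<in> {1,2}" "j \<in> {1,2}" "i \<noteq> j"
  shows "(\<Sum>k\<in>{1,2}. s i k) = 1 + s i j"
proof -
  have "{1,2} = {i, j :: nat}" using ij by auto
  then show ?thesis
    using ij exchange_matrix_diag[OF s ij(1)] by simp
qed

lemma basket_price_exchange_matrix:
  assumes "exchange_matrix s" "i \<in> {1,2}" "j \<in> {1,2}" "i \<noteq> j"
  shows "basket_price s i = 1 / (1 + s i j)"
  unfolding basket_price_def sum_row_exchange_matrix[OF assms] ..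

lemma active_iff:
  assumes "exchange_matrix s" "i \<in> {1,2}" "j \<in> {1,2}" "i \<noteq> j"
  shows "i \<in> active s \<longleftrightarrow> s i j < \<top>"
  unfolding active_def
  by (simp only: mem_Collect_eq sum_row_exchange_matrix[OF assms]) (use assms(2) in \<open>auto simp: less_top\<close>)

lemma basket_price_ne_top:
  assumes "exchange_matrix s" "i \<in> {1,2}"
  shows "basket_price s i \<noteq> \<top>"
proof -
  have "(\<Sum>k\<in>{1,2}. s i k) \<noteq> 0"
    using exchange_matrix_diag[OF assms] assms(2) by auto
  then show ?thesis
    unfolding basket_price_def by (simp add: ennreal_divide_eq_top_iff)
qed

lemma basket_price_eq_0_iff:
  assumes "exchange_matrix s" "i \<in> {1,2}" "j \<in> {1,2}" "i \<noteq> j"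
  shows "basket_price s i = 0 \<longleftrightarrow> s i j = \<top>"
  using assms by (simp add: basket_price_exchange_matrix)

lemma basket_price_change_numeraire:
  assumes s: "exchange_matrix s" and ij: "i \<in> {1,2}" "j \<in> {1,2}" "i \<noteq> j" and "s i j < \<top>"
  shows "basket_price s j = s i j * basket_price s i"
proof (cases "s i j = 0")
  case True
  then show ?thesis
    using exchange_matrix_zero_iff_top[OF s ij(1,2)] basket_price_exchange_matrix[OF s ij(2,1)] ij(3)
    by simp
next
  case False
  then show ?thesis
    using assms exchange_matrix_mult_inverse[OF s ij(1,2)] one_div_one_plus_reciprocal[of "s i j" "s j i"]
      basket_price_exchange_matrix[OF s ij] basket_price_exchange_matrix[OF s ij(2,1)] ij(3)
    by (simp add: zero_less_iff_neq_zero)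
qed

lemma basket_value_exchange_matrix:
  assumes s: "exchange_matrix s" and v: "value_vector s v"
  shows "basket_value s v = basket_price s 1 * v 1 + basket_price s 2 * (if s 1 2 = \<top> then v 2 else 0)"
proof -
  have s12: "s 1 2 = 0 \<longleftrightarrow> s 2 1 = \<top>"
    using exchange_matrix_zero_iff_top[OF s] by simp
  have act: "1 \<in> active s \<longleftrightarrow> s 1 2 < \<top>" "2 \<in> active s \<longleftrightarrow> s 2 1 < \<top>"
    using active_iff[OF s] by auto
  have "active s \<subseteq> {1,2}" unfolding active_def by auto
  consider "s 1 2 = \<top>" | "s 1 2 = 0" | "0 < s 1 2" "s 1 2 < \<top>"
    using less_top zero_less_iff_neq_zero by blast
  then show ?thesis
  proof cases
    case 1
    then have "active s = {2}" using act s12 \<open>active s \<subseteq> {1,2}\<close> by (auto simp: less_top)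
    then show ?thesis
      using 1 basket_price_eq_0_iff[OF s, of 1 2] unfolding basket_value_def by simp
  next
    case 2
    then have "active s = {1}" using act s12 \<open>active s \<subseteq> {1,2}\<close> by (auto simp: less_top)
    then show ?thesis
      using 2 s12 basket_price_eq_0_iff[OF s, of 2 1] unfolding basket_value_def by simp
  next
    case 3
    then have "s 2 1 \<noteq> \<top>" using s12 by auto
    then have "active s = {1,2}" using act 3 \<open>active s \<subseteq> {1,2}\<close> by (auto simp: less_top)
    moreover have "basket_price s 2 * v 2 = basket_price s 1 * v 1"
    proof -
      have "s 1 2 * v 2 = v 1"
        using v 3 unfolding value_vector_def prod_defined_def by auto
      then show ?thesis
        using basket_price_change_numeraire[OF s, of 1 2] 3 by (simp add: mult.commute mult.left_commute)
    qed
    moreover have "1 / 2 * (x + x) = (x :: ennreal)" for x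
      by (simp add: mult_2_right[symmetric] ennreal_divide_times ennreal_mult_divide_eq)
    ultimately show ?thesis
      using 3 unfolding basket_value_def by (simp add: less_top[symmetric])
  qed
qed

lemma space_valuation_measure [simp]: "space (valuation_measure M s Q) = space M"
  unfolding valuation_measure_def by (simp add: space_measure_of_conv)

lemma sets_valuation_measure [simp, measurable_cong]: "sets (valuation_measure M s Q) = sets M"
  unfolding valuation_measure_def by simp

lemma emeasure_valuation_measure:
  assumes Q: "sets (Q 1) = sets M" "sets (Q 2) = sets M" and A: "A \<in> sets M"
  shows "emeasure (valuation_measure M s Q) A
    = basket_price s 1 * emeasure (Q 1) A + basket_price s 2 * emeasure (Q 2) A"
  unfolding valuation_measure_def
proof (rule emeasure_measure_of_sigma[OF sets.sigma_algebra_axioms _ _ A])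
  let ?\<mu> = "\<lambda>A. basket_price s 1 * emeasure (Q 1) A + basket_price s 2 * emeasure (Q 2) A"
  show "positive (sets M) ?\<mu>"
    by (simp add: positive_def)
  show "countably_additive (sets M) ?\<mu>"
  proof (rule countably_additiveI)
    fix F :: "nat \<Rightarrow> _" assume F: "range F \<subseteq> sets M" "disjoint_family F" "\<Union> (range F) \<in> sets M"
    have "(\<Sum>i. ?\<mu> (F i)) = basket_price s 1 * (\<Sum>i. emeasure (Q 1) (F i))
                           + basket_price s 2 * (\<Sum>i. emeasure (Q 2) (F i))"
      by (simp add: suminf_add[symmetric])
    then show "(\<Sum>i. ?\<mu> (F i)) = ?\<mu> (\<Union> (range F))"
      using F Q by (simp add: suminf_emeasure)
  qed
qed

lemma nn_integral_valuation_measure: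
  assumes Q: "sets (Q 1) = sets M" "sets (Q 2) = sets M" and f: "f \<in> borel_measurable M"
  shows "(\<integral>\<^sup>+x. f x \<partial>valuation_measure M s Q)
    = basket_price s 1 * (\<integral>\<^sup>+x. f x \<partial>Q 1) + basket_price s 2 * (\<integral>\<^sup>+x. f x \<partial>Q 2)"
  using f
proof induction
  case (cong f g)
  have "(\<integral>\<^sup>+x. f x \<partial>N) = (\<integral>\<^sup>+x. g x \<partial>N)" if "sets N = sets M" for N
    using cong.hyps sets_eq_imp_space_eq[OF that] by (intro nn_integral_cong) simp
  with cong.IH Q show ?case
    by simp
next
  case (set A)
  with Q show ?case
    by (simp add: emeasure_valuation_measure)
next
  case (mult u c)
  with Q show ?case
    by (simp add: nn_integral_cmult distrib_left mult.left_commute)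
next
  case (add u v)
  have "(\<integral>\<^sup>+x. v x + u x \<partial>N) = (\<integral>\<^sup>+x. v x \<partial>N) + (\<integral>\<^sup>+x. u x \<partial>N)" if "sets N = sets M" for N
    using add.hyps by (intro nn_integral_add) (simp_all cong: measurable_cong_sets[OF that])
  with add.IH Q show ?case
    by (simp add: distrib_left)
next
  case (seq U)
  have sup: "(\<integral>\<^sup>+x. (SUP i. U i) x \<partial>N) = (SUP i. \<integral>\<^sup>+x. U i x \<partial>N)" if "sets N = sets M" for N
    unfolding SUP_apply using seq.hyps
    by (intro nn_integral_monotone_convergence_SUP) (simp_all cong: measurable_cong_sets[OF that])
  have mono: "incseq (\<lambda>i. c * \<integral>\<^sup>+x. U i x \<partial>N)" for c N
    using seq.hyps by (auto simp: incseq_def le_fun_def intro!: mult_left_mono nn_integral_mono)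
  show ?case
    unfolding sup[OF sets_valuation_measure] sup[OF Q(1)] sup[OF Q(2)] seq.IH
    by (simp add: ennreal_SUP_add[OF mono mono] SUP_mult_left_ennreal[symmetric])
qed

lemma finite_measure_valuation_measure:
  assumes s: "exchange_matrix s" and Q: "prob_space (Q 1)" "prob_space (Q 2)"
    and sets_Q: "sets (Q 1) = sets M" "sets (Q 2) = sets M"
  shows "finite_measure (valuation_measure M s Q)"
proof (rule finite_measureI)
  have "emeasure (Q 1) (space M) = 1" "emeasure (Q 2) (space M) = 1"
    using Q sets_Q by (metis prob_space.emeasure_space_1 sets_eq_imp_space_eq)+
  then have "emeasure (valuation_measure M s Q) (space M) = basket_price s 1 + basket_price s 2"
    using emeasure_valuation_measure[OF sets_Q sets.top] by simp
  then show "emeasure (valuation_measure M s Q) (space (valuation_measure M s Q)) \<noteq> \<infinity>"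
    using basket_price_ne_top[OF s] by simp
qed

lemma finite_measure_sigma_finite_subalgebra:
  "finite_measure M \<Longrightarrow> subalgebra M F \<Longrightarrow> sigma_finite_subalgebra M F"
  by (intro finite_measure_subalgebra_is_sigma_finite)
    (simp add: finite_measure_subalgebra_def finite_measure_subalgebra_axioms_def)

lemma nn_integral_eq_on_subalgebra:
  assumes sub: "subalgebra M F" "subalgebra N F"
    and f: "f \<in> borel_measurable M" and g: "g \<in> borel_measurable N"
    and eq: "\<And>A. A \<in> sets F \<Longrightarrow> (\<integral>\<^sup>+x. f x * indicator A x \<partial>M) = (\<integral>\<^sup>+x. g x * indicator A x \<partial>N)"
    and Y: "Y \<in> borel_measurable F"
  shows "(\<integral>\<^sup>+x. f x * Y x \<partial>M) = (\<integral>\<^sup>+x. g x * Y x \<partial>N)"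
proof -
  have sub': "subalgebra (density M f) F" "subalgebra (density N g) F"
    using sub by (simp_all add: subalgebra_def)
  have "restr_to_subalg (density M f) F = restr_to_subalg (density N g) F"
  proof (rule measure_eqI)
    fix A assume "A \<in> sets (restr_to_subalg (density M f) F)"
    then have A: "A \<in> sets F"
      using sets_restr_to_subalg[OF sub'(1)] by simp
    then have "A \<in> sets M" "A \<in> sets N"
      using sub by (auto simp: subalgebra_def)
    with A show "emeasure (restr_to_subalg (density M f) F) A = emeasure (restr_to_subalg (density N g) F) A"
      using f g eq[OF A] by (simp add: emeasure_restr_to_subalg sub' emeasure_density)
  qed (simp add: sets_restr_to_subalg sub')
  then have "(\<integral>\<^sup>+x. Y x \<partial>density M f) = (\<integral>\<^sup>+x. Y x \<partial>density N g)"
    by (metis nn_integral_subalgebra2 sub' Y)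
  moreover have "Y \<in> borel_measurable M" "Y \<in> borel_measurable N"
    using sub Y by (simp_all add: measurable_from_subalg)
  ultimately show ?thesis
    using f g by (simp add: nn_integral_density)
qed

locale numeraire_consistent_market =
  fixes M :: "'a measure" and F :: "real \<Rightarrow> 'a measure" and T :: real
    and S :: "real \<Rightarrow> 'a \<Rightarrow> nat \<Rightarrow> nat \<Rightarrow> ennreal" and Q :: "nat \<Rightarrow> 'a measure"
  assumes horizon_nonneg: "0 \<le> T"
    and filtration: "filtration M F T"
    and exchange_process: "exchange_process M F T S"
    and numeraire_consistent: "numeraire_consistent M F T S Q"
begin

lemma subalgebra_F: "t \<in> {0..T} \<Longrightarrow> subalgebra M (F t)"
  using filtration[unfolded filtration_def, THEN conjunct1] by blast

lemma sets_F_mono: "0 \<le> s \<Longrightarrow> s \<le> t \<Longrightarrow> t \<le> T \<Longrightarrow> sets (F s) \<subseteq> sets (F t)"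
  using filtration[unfolded filtration_def, THEN conjunct2, THEN conjunct1] by blast

lemma sets_F_horizon: "sets (F T) = sets M"
  using filtration[unfolded filtration_def] by blast

lemma prob_space_Q: "i \<in> {1,2} \<Longrightarrow> prob_space (Q i)"
  and sets_Q: "i \<in> {1,2} \<Longrightarrow> sets (Q i) = sets M"
  using numeraire_consistent[unfolded numeraire_consistent_def, THEN conjunct1] by blast+

lemma space_Q: "i \<in> {1,2} \<Longrightarrow> space (Q i) = space M"
  using sets_Q by (rule sets_eq_imp_space_eq)

lemma subalgebra_Q_F: "i \<in> {1,2} \<Longrightarrow> t \<in> {0..T} \<Longrightarrow> subalgebra (Q i) (F t)"
  using subalgebra_F sets_Q space_Q unfolding subalgebra_def by simp

lemma exchange_matrix_S: "t \<in> {0..T} \<Longrightarrow> \<omega> \<in> space M \<Longrightarrow> exchange_matrix (S t \<omega>)"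
  using exchange_process[unfolded exchange_process_def, THEN conjunct1] by blast

lemma measurable_S:
  "t \<in> {0..T} \<Longrightarrow> i \<in> {1,2} \<Longrightarrow> j \<in> {1,2} \<Longrightarrow> (\<lambda>\<omega>. S t \<omega> i j) \<in> borel_measurable (F t)"
  using exchange_process[unfolded exchange_process_def, THEN conjunct2, THEN conjunct1] by blast

lemma measurable_basket_price:
  assumes "t \<in> {0..T}" "i \<in> {1,2}"
  shows "(\<lambda>\<omega>. basket_price (S t \<omega>) i) \<in> borel_measurable (F t)"
  unfolding basket_price_def using assms by (intro borel_measurable_divide_ennreal borel_measurable_sum measurable_S) auto

lemma initial_exchange_rate_finite:
  assumes \<omega>: "\<omega> \<in> space M" and ij: "i \<in> {1,2}" "j \<in> {1,2}"
  shows "S 0 \<omega> i j < \<top>"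
proof -
  have s: "exchange_matrix (S 0 \<omega>)"
    using exchange_matrix_S[OF _ \<omega>] horizon_nonneg by simp
  have "0 < S 0 \<omega> 1 2" "S 0 \<omega> 1 2 < \<top>"
    using exchange_process[unfolded exchange_process_def, THEN conjunct2, THEN conjunct2, THEN conjunct2] \<omega>
    by blast+
  then have "S 0 \<omega> 2 1 < \<top>"
    using exchange_matrix_zero_iff_top[OF s, of 1 2] by (auto simp: top.not_eq_extremum[symmetric])
  then show ?thesis
    using ij \<open>S 0 \<omega> 1 2 < \<top>\<close> exchange_matrix_diag[OF s, of 1] exchange_matrix_diag[OF s, of 2] by auto
qed

lemma numeraire_change_indicator:
  assumes "i \<in> {1,2}" "j \<in> {1,2}" "t \<in> {0..T}" "A \<in> sets (F t)" "\<omega> \<in> space M"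
  shows "(\<integral>\<^sup>+x. S t x i j * indicator A x \<partial>Q i)
    = S 0 \<omega> i j * emeasure (Q j) (A \<inter> {x\<in>space M. 0 < S t x j i})"
  using numeraire_consistent[unfolded numeraire_consistent_def, THEN conjunct2] assms by blast

lemma sets_S_preimage:
  assumes "t \<in> {0..T}" "i \<in> {1,2}" "j \<in> {1,2}" "U \<in> sets borel"
  shows "{x\<in>space M. S t x i j \<in> U} \<in> sets (F t)"
  using measurable_sets[OF measurable_S[OF assms(1-3)] assms(4)] subalgebra_F[OF assms(1)]
  by (simp add: subalgebra_def vimage_def Int_def conj_commute)

lemma nn_integral_numeraire_change:
  assumes t: "t \<in> {0..T}" and ij: "i \<in> {1,2}" "j \<in> {1,2}" and \<omega>: "\<omega> \<in> space M"
    and Y: "Y \<in> borel_measurable (F t)"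
  shows "(\<integral>\<^sup>+x. S t x i j * Y x \<partial>Q i)
    = S 0 \<omega> i j * (\<integral>\<^sup>+x. indicator {x\<in>space M. 0 < S t x j i} x * Y x \<partial>Q j)"
proof -
  define B where "B = {x\<in>space M. 0 < S t x j i}"
  have B: "B \<in> sets (F t)" "B \<in> sets M"
    using sets_S_preimage[OF t ij(2,1), of "{0<..}"] subalgebra_F[OF t] unfolding B_def subalgebra_def by auto
  have "(\<integral>\<^sup>+x. S t x i j * Y x \<partial>Q i) = (\<integral>\<^sup>+x. S 0 \<omega> i j * indicator B x * Y x \<partial>Q j)"
  proof (rule nn_integral_eq_on_subalgebra[OF subalgebra_Q_F[OF ij(1) t] subalgebra_Q_F[OF ij(2) t] _ _ _ Y])
    show "(\<lambda>x. S t x i j) \<in> borel_measurable (Q i)"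
      using measurable_from_subalg[OF subalgebra_Q_F[OF ij(1) t] measurable_S[OF t ij]] .
    show "(\<lambda>x. S 0 \<omega> i j * indicator B x) \<in> borel_measurable (Q j)"
      using B(2) sets_Q[OF ij(2)] by simp
    fix A assume A: "A \<in> sets (F t)"
    then have "A \<inter> B \<in> sets (Q j)"
      using B subalgebra_F[OF t] sets_Q[OF ij(2)] by (auto simp: subalgebra_def)
    then show "(\<integral>\<^sup>+x. S t x i j * indicator A x \<partial>Q i)
        = (\<integral>\<^sup>+x. S 0 \<omega> i j * indicator B x * indicator A x \<partial>Q j)"
      using numeraire_change_indicator[OF ij t A \<omega>]
      by (simp add: B_def mult.assoc nn_integral_cmult_indicator indicator_inter_arith[symmetric] Int_commute)
  qed
  then show ?thesis
    using B(2) sets_Q[OF ij(2)] measurable_from_subalg[OF subalgebra_Q_F[OF ij(2) t] Y]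
    by (simp add: B_def mult.assoc nn_integral_cmult)
qed

lemma AE_S_finite:
  assumes t: "t \<in> {0..T}" and ij: "i \<in> {1,2}" "j \<in> {1,2}"
  shows "AE x in Q i. S t x i j < \<top>"
proof -
  obtain \<omega> where \<omega>: "\<omega> \<in> space M"
    using prob_space.not_empty[OF prob_space_Q[OF ij(1)]] space_Q[OF ij(1)] by auto
  define A where "A = {x\<in>space M. S t x i j \<in> {\<top>}}"
  have A: "A \<in> sets (F t)"
    unfolding A_def by (rule sets_S_preimage[OF t ij]) simp
  have "A \<inter> {x\<in>space M. 0 < S t x j i} = {}"
    using exchange_matrix_zero_iff_top[OF exchange_matrix_S[OF t] ij(2,1)] unfolding A_def by (auto simp: zero_less_iff_neq_zero)
  then have "(\<integral>\<^sup>+x. S t x i j * indicator A x \<partial>Q i) = 0"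
    using numeraire_change_indicator[OF ij t A \<omega>] by simp
  moreover have "(\<lambda>x. S t x i j * indicator A x) \<in> borel_measurable (Q i)"
    using A by (intro measurable_from_subalg[OF subalgebra_Q_F[OF ij(1) t]] borel_measurable_times_ennreal
      measurable_S[OF t ij] borel_measurable_indicator)
  ultimately have "AE x in Q i. S t x i j * indicator A x = 0"
    by (simp add: nn_integral_0_iff_AE)
  then show ?thesis
    by (rule AE_mp) (rule AE_I2, auto simp: A_def space_Q[OF ij(1)] indicator_def top.not_eq_extremum)
qed

lemma nn_integral_basket_price_numeraire_change:
  assumes t: "t \<in> {0..T}" and ij: "i \<in> {1,2}" "j \<in> {1,2}" "i \<noteq> j" and \<omega>: "\<omega> \<in> space M"
    and X: "X \<in> borel_measurable (F t)"
  shows "basket_price (S 0 \<omega>) j * (\<integral>\<^sup>+x. basket_price (S t x) i * X x \<partial>Q j)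
    = basket_price (S 0 \<omega>) i * (\<integral>\<^sup>+x. S t x i j * (basket_price (S t x) i * X x) \<partial>Q i)"
proof -
  have p: "(\<lambda>x. basket_price (S t x) i * X x) \<in> borel_measurable (F t)"
    using measurable_basket_price[OF t ij(1)] X by simp
  \<comment> \<open>where \<open>S t x j i = 0\<close>, the rate \<open>S t x i j\<close> is infinite and the basket price vanishes\<close>
  have "indicator {x\<in>space M. 0 < S t x j i} x * (basket_price (S t x) i * X x) = basket_price (S t x) i * X x"
    if "x \<in> space M" for x
    using that exchange_matrix_zero_iff_top[OF exchange_matrix_S[OF t that] ij(2,1)]
      basket_price_eq_0_iff[OF exchange_matrix_S[OF t that] ij]
    by (auto simp: zero_less_iff_neq_zero indicator_def)
  then have "(\<integral>\<^sup>+x. S t x i j * (basket_price (S t x) i * X x) \<partial>Q i)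
      = S 0 \<omega> i j * (\<integral>\<^sup>+x. basket_price (S t x) i * X x \<partial>Q j)"
    using nn_integral_numeraire_change[OF t ij(1,2) \<omega> p] space_Q[OF ij(2)]
    by (metis (no_types, lifting) nn_integral_cong)
  then show ?thesis
    using basket_price_change_numeraire[OF exchange_matrix_S[OF _ \<omega>] ij
        initial_exchange_rate_finite[OF \<omega> ij(1,2)]] horizon_nonneg
    by (simp add: mult.assoc mult.left_commute)
qed

lemma nn_integral_basket_price_one_plus_rate:
  assumes t: "t \<in> {0..T}" and ij: "i \<in> {1,2}" "j \<in> {1,2}" "i \<noteq> j"
  shows "(\<integral>\<^sup>+x. basket_price (S t x) i * X x + S t x i j * (basket_price (S t x) i * X x) \<partial>Q i)
    = (\<integral>\<^sup>+x. X x \<partial>Q i)"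
proof (rule nn_integral_cong_AE)
  show "AE x in Q i. basket_price (S t x) i * X x + S t x i j * (basket_price (S t x) i * X x) = X x"
    using AE_S_finite[OF t ij(1,2)] AE_space
  proof eventually_elim
    case (elim x)
    then have "basket_price (S t x) i * (1 + S t x i j) = 1"
      using basket_price_exchange_matrix[OF exchange_matrix_S[OF t] ij] space_Q[OF ij(1)]
      by (simp add: ennreal_divide_times top.not_eq_extremum[symmetric])
    then show ?case
      by (metis distrib_left mult.assoc mult.commute mult_1)
  qed
qed

lemma nn_integral_basket_price:
  assumes t: "t \<in> {0..T}" and i: "i \<in> {1,2}" and \<omega>: "\<omega> \<in> space M"
    and X: "X \<in> borel_measurable (F t)"
  shows "(\<integral>\<^sup>+x. basket_price (S t x) i * X x \<partial>valuation_measure M (S 0 \<omega>) Q)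
    = basket_price (S 0 \<omega>) i * (\<integral>\<^sup>+x. X x \<partial>Q i)"
proof -
  define j :: nat where "j = 3 - i"
  have j: "j \<in> {1,2}" "i \<noteq> j" and ij: "i = 1 \<and> j = 2 \<or> i = 2 \<and> j = 1"
    using i unfolding j_def by auto
  define p where "p x = basket_price (S t x) i * X x" for x
  have p: "p \<in> borel_measurable (F t)"
    unfolding p_def using measurable_basket_price[OF t i] X by simp
  have "(\<integral>\<^sup>+x. p x \<partial>valuation_measure M (S 0 \<omega>) Q)
      = basket_price (S 0 \<omega>) i * (\<integral>\<^sup>+x. p x \<partial>Q i) + basket_price (S 0 \<omega>) j * (\<integral>\<^sup>+x. p x \<partial>Q j)"
    using nn_integral_valuation_measure[OF sets_Q sets_Q measurable_from_subalg[OF subalgebra_F[OF t] p]] ij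
    by (elim disjE) (simp_all add: add.commute)
  also have "\<dots> = basket_price (S 0 \<omega>) i * ((\<integral>\<^sup>+x. p x \<partial>Q i) + (\<integral>\<^sup>+x. S t x i j * p x \<partial>Q i))"
    unfolding p_def nn_integral_basket_price_numeraire_change[OF t i j \<omega> X] by (simp add: distrib_left)
  also have "\<dots> = basket_price (S 0 \<omega>) i * (\<integral>\<^sup>+x. p x + S t x i j * p x \<partial>Q i)"
    using measurable_from_subalg[OF subalgebra_Q_F[OF i t] p]
      measurable_from_subalg[OF subalgebra_Q_F[OF i t] measurable_S[OF t i j(1)]]
    by (simp add: nn_integral_add)
  also have "\<dots> = basket_price (S 0 \<omega>) i * (\<integral>\<^sup>+x. X x \<partial>Q i)"
    unfolding p_def nn_integral_basket_price_one_plus_rate[OF t i j] ..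
  finally show ?thesis
    unfolding p_def .
qed

lemma nn_integral_basket_portfolio:
  assumes t: "t \<in> {0..T}" and \<omega>: "\<omega> \<in> space M"
    and X: "X1 \<in> borel_measurable (F t)" "X2 \<in> borel_measurable (F t)"
  shows "(\<integral>\<^sup>+x. basket_price (S t x) 1 * X1 x + basket_price (S t x) 2 * X2 x \<partial>valuation_measure M (S 0 \<omega>) Q)
    = basket_price (S 0 \<omega>) 1 * (\<integral>\<^sup>+x. X1 x \<partial>Q 1) + basket_price (S 0 \<omega>) 2 * (\<integral>\<^sup>+x. X2 x \<partial>Q 2)"
proof -
  have "(\<lambda>x. basket_price (S t x) k * Y x) \<in> borel_measurable (valuation_measure M (S 0 \<omega>) Q)"
    if "k \<in> {1,2}" "Y \<in> borel_measurable (F t)" for k Y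
    unfolding measurable_cong_sets[OF sets_valuation_measure refl] using that
    by (intro measurable_from_subalg[OF subalgebra_F[OF t]] borel_measurable_times_ennreal
        measurable_basket_price[OF t])
  then show ?thesis
    using X by (simp add: nn_integral_add nn_integral_basket_price[OF t _ \<omega>])
qed

lemma sigma_finite_subalgebra_valuation_measure:
  assumes "\<omega> \<in> space M" "r \<in> {0..T}"
  shows "sigma_finite_subalgebra (valuation_measure M (S 0 \<omega>) Q) (F r)"
proof (rule finite_measure_sigma_finite_subalgebra)
  show "finite_measure (valuation_measure M (S 0 \<omega>) Q)"
    using horizon_nonneg assms
    by (intro finite_measure_valuation_measure exchange_matrix_S prob_space_Q sets_Q) auto
  show "subalgebra (valuation_measure M (S 0 \<omega>) Q) (F r)"
    using subalgebra_F[OF assms(2)] by (simp add: subalgebra_def)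
qed

lemma sigma_finite_subalgebra_Q: "i \<in> {1,2} \<Longrightarrow> r \<in> {0..T} \<Longrightarrow> sigma_finite_subalgebra (Q i) (F r)"
  by (simp add: finite_measure_sigma_finite_subalgebra prob_space_Q prob_space.finite_measure
      subalgebra_Q_F)

lemma set_nn_integral_basket_portfolio_cond_exp:
  assumes \<omega>0: "\<omega>0 \<in> space M" and r: "0 \<le> r" "r \<le> t" and t: "t \<le> T"
    and X: "X1 \<in> borel_measurable (F t)" "X2 \<in> borel_measurable (F t)" and A: "A \<in> sets (F r)"
  defines "Qbar \<equiv> valuation_measure M (S 0 \<omega>0) Q"
    and "E1 \<equiv> nn_cond_exp (Q 1) (F r) X1" and "E2 \<equiv> nn_cond_exp (Q 2) (F r) X2"
  shows "(\<integral>\<^sup>+x\<in>A. basket_price (S t x) 1 * X1 x + basket_price (S t x) 2 * X2 x \<partial>Qbar)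
    = (\<integral>\<^sup>+x\<in>A. basket_price (S r x) 1 * E1 x + basket_price (S r x) 2 * E2 x \<partial>Qbar)"
proof -
  have r_T: "r \<in> {0..T}" and t_T: "t \<in> {0..T}"
    using r t by auto
  have "subalgebra (F t) (F r)"
    using sets_F_mono[OF r t] subalgebra_F[OF r_T] subalgebra_F[OF t_T] by (simp add: subalgebra_def)
  moreover have A_F: "indicator A \<in> borel_measurable (F r)"
    using A by simp
  ultimately have A_F_t: "indicator A \<in> borel_measurable (F t)"
    by (rule measurable_from_subalg)
  have X_Q: "X1 \<in> borel_measurable (Q 1)" "X2 \<in> borel_measurable (Q 2)"
    using X by (simp_all add: measurable_from_subalg[OF subalgebra_Q_F[OF _ t_T]])
  have "(\<integral>\<^sup>+x\<in>A. basket_price (S t x) 1 * X1 x + basket_price (S t x) 2 * X2 x \<partial>Qbar)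
      = (\<integral>\<^sup>+x. basket_price (S t x) 1 * (indicator A x * X1 x)
              + basket_price (S t x) 2 * (indicator A x * X2 x) \<partial>Qbar)"
    by (auto intro!: nn_integral_cong simp: indicator_def)
  also have "\<dots> = basket_price (S 0 \<omega>0) 1 * (\<integral>\<^sup>+x. indicator A x * X1 x \<partial>Q 1)
                  + basket_price (S 0 \<omega>0) 2 * (\<integral>\<^sup>+x. indicator A x * X2 x \<partial>Q 2)"
    unfolding Qbar_def using X A_F_t
    by (intro nn_integral_basket_portfolio[OF t_T \<omega>0] borel_measurable_times_ennreal)
  also have "\<dots> = basket_price (S 0 \<omega>0) 1 * (\<integral>\<^sup>+x. indicator A x * E1 x \<partial>Q 1)
                  + basket_price (S 0 \<omega>0) 2 * (\<integral>\<^sup>+x. indicator A x * E2 x \<partial>Q 2)"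
    unfolding E1_def E2_def
    using sigma_finite_subalgebra.nn_cond_exp_intg[OF sigma_finite_subalgebra_Q[OF _ r_T] A_F] X_Q
    by simp
  also have "\<dots> = (\<integral>\<^sup>+x. basket_price (S r x) 1 * (indicator A x * E1 x)
                  + basket_price (S r x) 2 * (indicator A x * E2 x) \<partial>Qbar)"
    unfolding Qbar_def E1_def E2_def using A_F
    by (intro nn_integral_basket_portfolio[OF r_T \<omega>0, symmetric] borel_measurable_times_ennreal) simp_all
  also have "\<dots> = (\<integral>\<^sup>+x\<in>A. basket_price (S r x) 1 * E1 x + basket_price (S r x) 2 * E2 x \<partial>Qbar)"
    by (auto intro!: nn_integral_cong simp: indicator_def)
  finally show ?thesis .
qed

lemma nn_cond_exp_basket_portfolio:
  assumes \<omega>0: "\<omega>0 \<in> space M" and r: "0 \<le> r" "r \<le> t" and t: "t \<le> T"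
    and X: "X1 \<in> borel_measurable (F t)" "X2 \<in> borel_measurable (F t)"
  defines "Qbar \<equiv> valuation_measure M (S 0 \<omega>0) Q"
  shows "AE \<omega> in Qbar.
    nn_cond_exp Qbar (F r) (\<lambda>x. basket_price (S t x) 1 * X1 x + basket_price (S t x) 2 * X2 x) \<omega>
      = basket_price (S r \<omega>) 1 * nn_cond_exp (Q 1) (F r) X1 \<omega>
        + basket_price (S r \<omega>) 2 * nn_cond_exp (Q 2) (F r) X2 \<omega>"
proof (rule AE_symmetric[OF sigma_finite_subalgebra.nn_cond_exp_charact])
  have r_T: "r \<in> {0..T}" and t_T: "t \<in> {0..T}"
    using r t by auto
  show "sigma_finite_subalgebra Qbar (F r)"
    unfolding Qbar_def using sigma_finite_subalgebra_valuation_measure[OF \<omega>0 r_T] .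
  show "(\<lambda>x. basket_price (S t x) 1 * X1 x + basket_price (S t x) 2 * X2 x) \<in> borel_measurable Qbar"
    unfolding Qbar_def measurable_cong_sets[OF sets_valuation_measure refl] using X
    by (intro measurable_from_subalg[OF subalgebra_F[OF t_T]] borel_measurable_add
        borel_measurable_times_ennreal measurable_basket_price[OF t_T]) auto
  show "(\<lambda>x. basket_price (S r x) 1 * nn_cond_exp (Q 1) (F r) X1 x
      + basket_price (S r x) 2 * nn_cond_exp (Q 2) (F r) X2 x) \<in> borel_measurable (F r)"
    by (intro borel_measurable_add borel_measurable_times_ennreal measurable_basket_price[OF r_T]) auto
qed (use set_nn_integral_basket_portfolio_cond_exp[OF \<omega>0 r t X] in \<open>simp add: Qbar_def\<close>)

lemma nn_cond_exp_basket_value: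
  assumes \<omega>0: "\<omega>0 \<in> space M" and r: "r \<in> {0..T}" and C: "claim M T S C"
  defines "Qbar \<equiv> valuation_measure M (S 0 \<omega>0) Q"
  shows "AE \<omega> in Qbar.
    nn_cond_exp Qbar (F r) (\<lambda>x. basket_value (S T x) (C x)) \<omega>
      = basket_price (S r \<omega>) 1 * nn_cond_exp (Q 1) (F r) (\<lambda>x. C x 1) \<omega>
        + basket_price (S r \<omega>) 2 *
            nn_cond_exp (Q 2) (F r) (\<lambda>x. C x 2 * indicator {y\<in>space M. S T y 1 2 = \<top>} x) \<omega>"
proof -
  have T: "T \<in> {0..T}" using horizon_nonneg by simp
  define X1 where "X1 x = C x 1" for x
  define X2 where "X2 x = C x 2 * indicator {y\<in>space M. S T y 1 2 = \<top>} x" for x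
  have X: "X1 \<in> borel_measurable (F T)" "X2 \<in> borel_measurable (F T)"
    using C sets_S_preimage[OF T, of 1 2 "{\<top>}"]
    unfolding claim_def X1_def X2_def measurable_cong_sets[OF sets_F_horizon refl] sets_F_horizon
    by auto
  have basket_value: "basket_value (S T x) (C x) = basket_price (S T x) 1 * X1 x + basket_price (S T x) 2 * X2 x"
    if "x \<in> space M" for x
    using basket_value_exchange_matrix[OF exchange_matrix_S[OF T that]] C that
    unfolding claim_def X1_def X2_def by (simp add: indicator_def)
  have portfolio: "(\<lambda>x. basket_price (S T x) 1 * X1 x + basket_price (S T x) 2 * X2 x) \<in> borel_measurable Qbar"
    unfolding Qbar_def measurable_cong_sets[OF trans[OF sets_valuation_measure sets_F_horizon[symmetric]] refl]
    using X by (intro borel_measurable_add borel_measurable_times_ennreal measurable_basket_price[OF T]) auto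
  have "AE \<omega> in Qbar. nn_cond_exp Qbar (F r) (\<lambda>x. basket_value (S T x) (C x)) \<omega>
      = nn_cond_exp Qbar (F r) (\<lambda>x. basket_price (S T x) 1 * X1 x + basket_price (S T x) 2 * X2 x) \<omega>"
    using sigma_finite_subalgebra_valuation_measure[OF \<omega>0 r] portfolio basket_value
      measurable_cong[THEN iffD2, OF _ portfolio, of "\<lambda>x. basket_value (S T x) (C x)"]
    unfolding Qbar_def by (intro sigma_finite_subalgebra.nn_cond_exp_cong AE_I2) simp_all
  moreover have "AE \<omega> in Qbar.
      nn_cond_exp Qbar (F r) (\<lambda>x. basket_price (S T x) 1 * X1 x + basket_price (S T x) 2 * X2 x) \<omega>
        = basket_price (S r \<omega>) 1 * nn_cond_exp (Q 1) (F r) X1 \<omega>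
          + basket_price (S r \<omega>) 2 * nn_cond_exp (Q 2) (F r) X2 \<omega>"
    using nn_cond_exp_basket_portfolio[OF \<omega>0 _ _ order_refl X] r unfolding Qbar_def by simp
  ultimately show ?thesis
    unfolding X1_def[abs_def] X2_def[abs_def] by eventually_elim simp
qed

end

lemma basket_portfolio_div_basket_price:
  assumes s: "exchange_matrix s" and ij: "i \<in> {1,2}" "j \<in> {1,2}" "i \<noteq> j" and act: "i \<in> active s"
  shows "(basket_price s i * x + basket_price s j * y) / basket_price s i = x + s i j * y"
proof -
  have fin: "s i j < \<top>"
    using active_iff[OF s ij] act by simp
  have "basket_price s i \<noteq> 0" "basket_price s i \<noteq> \<top>"
    using basket_price_eq_0_iff[OF s ij] basket_price_ne_top[OF s ij(1)] fin by auto
  moreover have "basket_price s i * x + basket_price s j * y = (x + s i j * y) * basket_price s i"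
    using basket_price_change_numeraire[OF s ij fin] by (simp add: algebra_simps)
  ultimately show ?thesis
    by (simp add: ennreal_mult_divide_eq)
qed

theorem mainTheorem10:
  fixes M :: "'a measure" and F :: "real \<Rightarrow> 'a measure" and T r :: real
    and S :: "real \<Rightarrow> 'a \<Rightarrow> nat \<Rightarrow> nat \<Rightarrow> ennreal"
    and Q :: "nat \<Rightarrow> 'a measure" and C :: "'a \<Rightarrow> nat \<Rightarrow> ennreal" and \<omega>0 :: 'a
  assumes "0 < T"
    and "filtration M F T"
    and "exchange_process M F T S"
    and "numeraire_consistent M F T S Q"
    and "\<omega>0 \<in> space M"
    and "r \<in> {0..T}"
    and "claim M T S C"
    and "\<forall>i\<in>{1,2}. (\<integral>\<^sup>+x. C x i \<partial>Q i) < \<top>"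
  defines "Qbar \<equiv> valuation_measure M (S 0 \<omega>0) Q"
  shows "(AE \<omega> in Qbar.
            nn_cond_exp Qbar (F r) (\<lambda>x. basket_value (S T x) (C x)) \<omega>
              = basket_price (S r \<omega>) 1 * nn_cond_exp (Q 1) (F r) (\<lambda>x. C x 1) \<omega>
                + basket_price (S r \<omega>) 2 *
                    nn_cond_exp (Q 2) (F r) (\<lambda>x. C x 2 * indicator {y\<in>space M. S T y 1 2 = \<top>} x) \<omega>)
       \<and> (AE \<omega> in Qbar. 1 \<in> active (S r \<omega>) \<longrightarrow>
            nn_cond_exp Qbar (F r) (\<lambda>x. basket_value (S T x) (C x)) \<omega> / basket_price (S r \<omega>) 1
              = nn_cond_exp (Q 1) (F r) (\<lambda>x. C x 1) \<omega>
                + S r \<omega> 1 2 *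
                    nn_cond_exp (Q 2) (F r) (\<lambda>x. C x 2 * indicator {y\<in>space M. S T y 1 2 = \<top>} x) \<omega>)"
  (is "?expansion \<and> ?in_currency_1")
proof -
  interpret numeraire_consistent_market M F T S Q
    using assms(1-4) by unfold_locales auto
  have expansion: ?expansion
    unfolding Qbar_def by (rule nn_cond_exp_basket_value[OF assms(5,6,7)])
  then have ?in_currency_1
    using AE_space
    by eventually_elim (use basket_portfolio_div_basket_price[OF exchange_matrix_S[OF assms(6)], of _ 1 2]
        in \<open>simp add: Qbar_def\<close>)
  with expansion show ?thesis ..
qed

end
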